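(* Let $G$ be a discrete group. Every proper weight function $\ell$ on $G$ is a slow conditionally negative type function.
   Context: A weight on $G$ is a conditionally negative type function $\ell:G\to[0,\infty)$ (symmetric, $\ell(e)=0$, strictly positive away from $e$) satisfying $\ell(st)\le\ell(s)+\ell(t)$ for all $s,t\in G$. It is proper if $\{g:\ell(g)\le m\}$ is finite for every $m$. A conditionally negative type function is slow if it is proper and for every fixed $g\in G$, $\ell(g^{-1}g')=\ell(g')+o(\ell(g')^{1/2})$ as $g'\to\infty$ (i.e. leaves every finite set). *)

theory Defs
  imports Complex_Main "HOL-Library.Landau_Symbols"
begin

text \<open>Groups are modelled by the type class group_add (not necessarily
commutative); the group law is written +, the identity 0, inverse uminus.
So g^{-1} g' is written -g + g'.\<close>

definition cond_neg_type :: "('a::group_add \<Rightarrow> real) \<Rightarrow> bool" where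
  "cond_neg_type \<psi> \<longleftrightarrow>
     \<psi> 0 = 0 \<and> (\<forall>g. \<psi> (- g) = \<psi> g) \<and>
     (\<forall>(n::nat) (x::nat \<Rightarrow> 'a) (c::nat \<Rightarrow> real).
        (\<Sum>i<n. c i) = 0 \<longrightarrow>
        (\<Sum>i<n. \<Sum>j<n. c i * c j * \<psi> (- x j + x i)) \<le> 0)"

definition is_weight :: "('a::group_add \<Rightarrow> real) \<Rightarrow> bool" where
  "is_weight l \<longleftrightarrow>
     cond_neg_type l \<and> (\<forall>g. l g \<ge> 0) \<and> (\<forall>g. g \<noteq> 0 \<longrightarrow> l g > 0) \<and>
     (\<forall>s t. l (s + t) \<le> l s + l t)"

definition proper_fun :: "('a \<Rightarrow> real) \<Rightarrow> bool" where
  "proper_fun l \<longleftrightarrow> (\<forall>m. finite {g. l g \<le> m})"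

text \<open>g' \<rightarrow> \<infinity> (leaving every finite set) is the cofinite filter.\<close>
definition slow_cnt :: "('a::group_add \<Rightarrow> real) \<Rightarrow> bool" where
  "slow_cnt l \<longleftrightarrow>
     cond_neg_type l \<and> proper_fun l \<and>
     (\<forall>g. (\<lambda>g'. l (- g + g') - l g') \<in> o[cofinite](\<lambda>g'. sqrt (l g')))"

end

theory Submission
  imports Defs
begin

text \<open>By subadditivity and symmetry a weight moves by at most l g under left
translation by g, so l (-g + g') - l g' is bounded; properness makes
sqrt (l g') tend to infinity along the cofinite filter, and a bounded function is
little-o of any function tending to infinity.\<close>

lemma subadditive_translate_bound:
  fixes l :: "'a::group_add \<Rightarrow> real"
  assumes subadd: "\<And>s t. l (s + t) \<le> l s + l t" and symm: "\<And>g. l (- g) = l g"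
  shows "\<bar>l (- g + g') - l g'\<bar> \<le> l g"
proof -
  have "l (- g + g') \<le> l g + l g'"
    using subadd[of "- g" g'] symm[of g] by simp
  moreover have "l g' \<le> l g + l (- g + g')"
    using subadd[of g "- g + g'"] by (simp add: add.assoc[symmetric])
  ultimately show ?thesis by linarith
qed

lemma weight_translate_diff_bigo_1:
  fixes l :: "'a::group_add \<Rightarrow> real"
  assumes "is_weight l"
  shows "(\<lambda>g'. l (- g + g') - l g') \<in> O[F](\<lambda>_. 1)"
proof (rule bigoI)
  have "\<And>s t. l (s + t) \<le> l s + l t" and "\<And>g. l (- g) = l g"
    using assms unfolding is_weight_def cond_neg_type_def by auto
  then have "\<bar>l (- g + g') - l g'\<bar> \<le> l g" for g'
    by (rule subadditive_translate_bound)
  then show "\<forall>\<^sub>F g' in F. norm (l (- g + g') - l g') \<le> l g * norm (1::real)"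
    by (simp add: always_eventually)
qed

lemma proper_fun_filterlim_at_top:
  assumes "proper_fun l"
  shows "filterlim l at_top cofinite"
proof (rule filterlim_at_top_dense[THEN iffD2], intro allI)
  fix M
  have "finite {x. l x \<le> M}"
    using assms unfolding proper_fun_def by blast
  then show "\<forall>\<^sub>F x in cofinite. M < l x"
    unfolding eventually_cofinite by (simp add: not_less)
qed

lemma bigo_1_smallo_if_filterlim_at_infinity:
  fixes f :: "'a \<Rightarrow> 'b::real_normed_field" and g :: "'a \<Rightarrow> 'b"
  assumes "f \<in> O[F](\<lambda>_. 1)" and "filterlim g at_infinity F"
  shows "f \<in> o[F](g)"
proof -
  have "g \<in> \<omega>[F](\<lambda>_. 1)"
    using assms(2) by (simp only: smallomega_1_conv_filterlim)
  then have "(\<lambda>_. 1) \<in> o[F](g)"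
    by (simp only: smallomega_iff_smallo)
  with assms(1) show ?thesis by (rule landau_o.big_small_trans)
qed

theorem lemma5p5:
  fixes l :: "'a::group_add \<Rightarrow> real"
  assumes "is_weight l" and "proper_fun l"
  shows "slow_cnt l"
proof -
  have "filterlim (\<lambda>g'. sqrt (l g')) at_infinity cofinite"
    using filterlim_compose[OF sqrt_at_top proper_fun_filterlim_at_top[OF assms(2)]]
    by (rule filterlim_at_top_imp_at_infinity)
  then have "(\<lambda>g'. l (- g + g') - l g') \<in> o[cofinite](\<lambda>g'. sqrt (l g'))" for g
    by (rule bigo_1_smallo_if_filterlim_at_infinity[OF weight_translate_diff_bigo_1[OF assms(1)]])
  moreover have "cond_neg_type l"
    using assms(1) unfolding is_weight_def by blast
  ultimately show ?thesis
    unfolding slow_cnt_def using assms(2) by blast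
qed

end
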